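(* Let $n\ge 1$, let $C_u(v_1),\ldots,C_u(v_n)>0$ and $R_1,\ldots,R_n>0$, and run the algorithm described in the context on these inputs. For every $\alpha$ with $1\le\alpha\le n$: if $\sum_{i=1}^n U_i[\alpha] \geq (n-2)R_\alpha$, then $\sum_{i=1}^n r_{\alpha,i} = R_\alpha$ at the end of iteration $\alpha$ of the outer loop.
   Context: Sub-stream rate assigning algorithm. Input: $n$, uplink capacities $C_u(v_1),\ldots,C_u(v_n)$ and rates $R_1,\ldots,R_n$. Initialize $r_{i,j}:=0$ for all $1\le i,j\le n$ and $U_i := C_u(v_i)-R_i$ for $1\le i\le n$. Outer loop: for $i=1$ to $n$: set $R'_i := R_i$; inner loop: for $j=1$ to $n$: if $(n-2)R'_i > U_j$ then set $r_{i,j} := U_j/(n-2)$, else set $r_{i,j} := R'_i$; then set $U_j := U_j-(n-2)r_{i,j}$ and $R'_i := R'_i - r_{i,j}$; if $R'_i = 0$, exit the inner loop. Output all $r_{i,j}$. Notation: $U_i[\alpha]$ denotes the value of the variable $U_i$ at the start of iteration $\alpha$ of the outer loop. *)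

theory Defs
  imports Main Complex_Main
begin

text \<open>State of the sub-stream rate assigning algorithm:
  (U, r, R', stop) where U :: nat => real holds the variables U_1..U_n,
  r :: nat => nat => real holds r_{i,j}, R' is the current R'_i and
  stop records that the inner loop has been exited.\<close>

type_synonym alg_state = "(nat \<Rightarrow> real) \<times> (nat \<Rightarrow> nat \<Rightarrow> real) \<times> real \<times> bool"

text \<open>One iteration j of the inner loop inside outer iteration i.
  The factor (n-2) is computed in the reals.\<close>
definition inner_step :: "nat \<Rightarrow> nat \<Rightarrow> alg_state \<Rightarrow> nat \<Rightarrow> alg_state" where
  "inner_step n i st j =
     (case st of (U, r, R', stop) \<Rightarrow>
        if stop then st
        else (let x = (if (real n - 2) * R' > U j then U j / (real n - 2) else R');
                  U' = U(j := U j - (real n - 2) * x);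
                  r' = r(i := (r i)(j := x));
                  R'' = R' - x
              in (U', r', R'', R'' = 0)))"

definition outer_step :: "nat \<Rightarrow> (nat \<Rightarrow> real) \<Rightarrow> alg_state \<Rightarrow> nat \<Rightarrow> alg_state" where
  "outer_step n R st i =
     (case st of (U, r, _, _) \<Rightarrow> foldl (inner_step n i) (U, r, R i, False) [1..<n+1])"

definition alg_init :: "(nat \<Rightarrow> real) \<Rightarrow> (nat \<Rightarrow> real) \<Rightarrow> alg_state" where
  "alg_init Cu R = ((\<lambda>i. Cu i - R i), (\<lambda>i j. 0), 0, False)"

definition alg_after :: "nat \<Rightarrow> (nat \<Rightarrow> real) \<Rightarrow> (nat \<Rightarrow> real) \<Rightarrow> nat \<Rightarrow> alg_state" where
  "alg_after n Cu R k = foldl (outer_step n R) (alg_init Cu R) [1..<k+1]"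

text \<open>U_i[alpha]: value of U_i at the start of outer iteration alpha.\<close>
definition U_at :: "nat \<Rightarrow> (nat \<Rightarrow> real) \<Rightarrow> (nat \<Rightarrow> real) \<Rightarrow> nat \<Rightarrow> nat \<Rightarrow> real" where
  "U_at n Cu R \<alpha> i = fst (alg_after n Cu R (\<alpha> - 1)) i"

definition r_after :: "nat \<Rightarrow> (nat \<Rightarrow> real) \<Rightarrow> (nat \<Rightarrow> real) \<Rightarrow> nat \<Rightarrow> nat \<Rightarrow> nat \<Rightarrow> real" where
  "r_after n Cu R k i j = fst (snd (alg_after n Cu R k)) i j"

end

theory Submission
  imports Defs
begin

text \<open>During outer iteration \<open>\<alpha>\<close> the row \<open>r\<^sub>\<alpha>\<close> starts at zero, and every inner step moves some
  amount from \<open>R'\<^sub>\<alpha>\<close> into \<open>r\<^sub>\<alpha>\<^sub>,\<^sub>j\<close>, so the row sum plus \<open>R'\<^sub>\<alpha>\<close> stays \<open>R\<^sub>\<alpha>\<close>. If the inner loop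
  never exits, then at every \<open>j\<close> the test \<open>(n-2)R'\<^sub>\<alpha> > U\<^sub>j\<close> succeeded and \<open>U\<^sub>j\<close> was used up completely,
  which forces \<open>\<Sum>\<^sub>j U\<^sub>j[\<alpha>] < (n-2)R\<^sub>\<alpha>\<close>. Hence under the hypothesis the loop exits, i.e. with
  \<open>R'\<^sub>\<alpha> = 0\<close>, and the row sums to \<open>R\<^sub>\<alpha>\<close>.\<close>

lemma inner_step_stopped [simp]:
  "inner_step n i (U, r, R', True) j = (U, r, R', True)"
  by (simp add: inner_step_def)

lemma inner_loop_stopped:
  "foldl (inner_step n i) (U, r, R', True) js = (U, r, R', True)"
  by (induction js) simp_all

lemma inner_step_running:
  assumes "x = (if (real n - 2) * R' > U j then U j / (real n - 2) else R')"
  shows "inner_step n i (U, r, R', False) j =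
           (U(j := U j - (real n - 2) * x), r(i := (r i)(j := x)), R' - x, R' - x = 0)"
  using assms by (simp add: inner_step_def Let_def)

lemma inner_loop_other_row:
  assumes "foldl (inner_step n i) (U, r, R', s) js = (U', r', R'', s')" and "k \<noteq> i"
  shows "r' k = r k"
  using assms
proof (induction js arbitrary: U r R' s)
  case (Cons j js)
  then show ?case
    by (cases s) (auto simp: inner_loop_stopped inner_step_running[OF refl])
qed simp

lemma inner_loop_stops_at_zero:
  assumes "foldl (inner_step n i) (U, r, R', s) js = (U', r', R'', True)"
    and "s \<longrightarrow> R' = 0"
  shows "R'' = 0"
  using assms
proof (induction js arbitrary: U r R' s)
  case (Cons j js)
  then show ?case
    by (cases s) (auto simp: inner_loop_stopped inner_step_running[OF refl])
qed simp

lemma inner_loop_row_sum: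
  assumes "foldl (inner_step n i) (U, r, R', s) js = (U', r', R'', s')"
    and "distinct js" and "set js \<subseteq> A" and "finite A" and "\<forall>j\<in>set js. r i j = 0"
  shows "(\<Sum>j\<in>A. r' i j) + R'' = (\<Sum>j\<in>A. r i j) + R'"
  using assms
proof (induction js arbitrary: U r R' s)
  case (Cons j js)
  show ?case
  proof (cases s)
    case True
    then show ?thesis using Cons.prems(1) by (simp add: inner_loop_stopped)
  next
    case False
    define x where "x = (if (real n - 2) * R' > U j then U j / (real n - 2) else R')"
    have rest: "foldl (inner_step n i)
        (U(j := U j - (real n - 2) * x), r(i := (r i)(j := x)), R' - x, R' - x = 0) js
        = (U', r', R'', s')"
      using Cons.prems(1) False
      by (simp only: foldl_Cons inner_step_running[where n = n and U = U and j = j and R' = R', OF x_def])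
    have "(\<Sum>j'\<in>A. r' i j') + R'' = (\<Sum>j'\<in>A. (r(i := (r i)(j := x))) i j') + (R' - x)"
      by (rule Cons.IH[OF rest]) (use Cons.prems in auto)
    also have "\<dots> = (\<Sum>j'\<in>A. r i j') + R'"
    proof -
      have "j \<in> A" and "r i j = 0" using Cons.prems by auto
      then show ?thesis
        using sum.remove[OF \<open>finite A\<close> \<open>j \<in> A\<close>, of "(r i)(j := x)"]
          sum.remove[OF \<open>finite A\<close> \<open>j \<in> A\<close>, of "r i"] by simp
    qed
    finally show ?thesis .
  qed
qed auto

lemma inner_loop_running_sum_less:
  assumes "foldl (inner_step n i) (U, r, R', False) js = (U', r', R'', False)"
    and "distinct js" and "js \<noteq> []"
  shows "(\<Sum>j\<in>set js. U j) < (real n - 2) * R'"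
  using assms
proof (induction js arbitrary: U r R')
  case (Cons j js)
  define c where "c = real n - 2"
  define x where "x = (if c * R' > U j then U j / c else R')"
  note step = inner_step_running[where n = n and U = U and j = j and R' = R', OF x_def[unfolded c_def]]
  have exceeds: "c * R' > U j"
    using Cons.prems(1) by (rule contrapos_pp) (simp add: step x_def inner_loop_stopped)
  have "R' - x \<noteq> 0"
  proof
    assume "R' - x = 0"
    with Cons.prems(1) show False by (simp add: step inner_loop_stopped)
  qed
  \<comment> \<open>For \<open>n = 2\<close> the division gives \<open>x = 0\<close>; the bound then holds because \<open>U\<^sub>j < 0\<close>.\<close>
  have absorbed: "U j + c * (R' - x) \<le> c * R'"
    using exceeds by (cases "c = 0") (simp_all add: x_def algebra_simps)
  show ?case
  proof (cases "js = []")
    case True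
    then show ?thesis using exceeds by (simp add: c_def)
  next
    case False
    have rest: "foldl (inner_step n i) (U(j := U j - c * x), r(i := (r i)(j := x)), R' - x, False) js
        = (U', r', R'', False)"
      using Cons.prems(1) \<open>R' - x \<noteq> 0\<close> by (simp only: foldl_Cons step c_def simp_thms)
    have "(\<Sum>j'\<in>set js. (U(j := U j - c * x)) j') < c * (R' - x)"
      using Cons.IH[OF rest] Cons.prems(2) False by (simp add: c_def)
    moreover have "(\<Sum>j'\<in>set js. (U(j := U j - c * x)) j') = (\<Sum>j'\<in>set js. U j')"
      using Cons.prems(2) by (intro sum.cong) auto
    ultimately show ?thesis using absorbed Cons.prems(2) by (simp add: c_def)
  qed
qed simp

lemma outer_step_row_sum:
  assumes "r i = (\<lambda>j. 0)" and "n \<ge> 1"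
    and "(\<Sum>j=1..n. U j) \<ge> (real n - 2) * R i"
  shows "(\<Sum>j=1..n. fst (snd (outer_step n R (U, r, R', s) i)) i j) = R i"
proof -
  obtain U' r' R'' s' where loop: "foldl (inner_step n i) (U, r, R i, False) [1..<n+1] = (U', r', R'', s')"
    by (metis prod.exhaust)
  have "set [1..<n+1] = {1..n}" by auto
  then have exited: s' using inner_loop_running_sum_less[of n i U r "R i" "[1..<n+1]"] loop assms(2,3)
    by fastforce
  then have "R'' = 0" using inner_loop_stops_at_zero[of n i U r "R i" False] loop by simp
  moreover have "(\<Sum>j=1..n. r' i j) + R'' = (\<Sum>j=1..n. r i j) + R i"
    by (rule inner_loop_row_sum[OF loop]) (auto simp: assms(1))
  moreover have "outer_step n R (U, r, R', s) i = (U', r', R'', s')"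
    using loop by (simp only: outer_step_def prod.case)
  ultimately show ?thesis using assms(1) by simp
qed

lemma alg_after_Suc:
  "alg_after n Cu R (Suc k) = outer_step n R (alg_after n Cu R k) (Suc k)"
  by (simp add: alg_after_def)

lemma alg_after_row_untouched:
  "k < i \<Longrightarrow> fst (snd (alg_after n Cu R k)) i = (\<lambda>j. 0)"
proof (induction k)
  case 0
  then show ?case by (simp add: alg_after_def alg_init_def)
next
  case (Suc k)
  obtain U r R' s where "alg_after n Cu R k = (U, r, R', s)" by (metis prod.exhaust)
  moreover obtain U' r' R'' s' where
    "foldl (inner_step n (Suc k)) (U, r, R (Suc k), False) [1..<n+1] = (U', r', R'', s')"
    by (metis prod.exhaust)
  ultimately show ?case
    using Suc inner_loop_other_row by (fastforce simp: alg_after_Suc outer_step_def)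
qed

theorem propositionB1:
  fixes n :: nat and Cu R :: "nat \<Rightarrow> real" and \<alpha> :: nat
  assumes "n \<ge> 1"
    and "\<And>i. 1 \<le> i \<Longrightarrow> i \<le> n \<Longrightarrow> Cu i > 0"
    and "\<And>i. 1 \<le> i \<Longrightarrow> i \<le> n \<Longrightarrow> R i > 0"
    and "1 \<le> \<alpha>" and "\<alpha> \<le> n"
    and "(\<Sum>i=1..n. U_at n Cu R \<alpha> i) \<ge> (real n - 2) * R \<alpha>"
  shows "(\<Sum>i=1..n. r_after n Cu R \<alpha> \<alpha> i) = R \<alpha>"
proof -
  obtain U r R' s where before: "alg_after n Cu R (\<alpha> - 1) = (U, r, R', s)"
    by (metis prod.exhaust)
  have "alg_after n Cu R \<alpha> = outer_step n R (U, r, R', s) \<alpha>"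
    using alg_after_Suc[of n Cu R "\<alpha> - 1"] before assms(4) by simp
  moreover have "r \<alpha> = (\<lambda>j. 0)"
    using alg_after_row_untouched[of "\<alpha> - 1" \<alpha> n Cu R] before assms(4) by simp
  moreover have "(\<Sum>j=1..n. U j) \<ge> (real n - 2) * R \<alpha>"
    using assms(6) before by (simp add: U_at_def)
  ultimately show ?thesis
    using outer_step_row_sum assms(1) by (simp add: r_after_def)
qed

end
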